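(* Let $\boldsymbol{x}\in\mathbb{T}^3$ and $\boldsymbol{v}\in\mathbb{S}^2$, and for $\underline{\omega}=(\omega_1,\omega_2,\dots)$ with $\omega_i\in\Omega_0$ define $\boldsymbol{x}_0=\boldsymbol{x}$, $\boldsymbol{v}_0=\boldsymbol{v}$ and recursively $\boldsymbol{x}_n=f_{\omega_n}(\boldsymbol{x}_{n-1})$, $\boldsymbol{v}_n=\dfrac{D_{\boldsymbol{x}_{n-1}}f_{\omega_n}\boldsymbol{v}_{n-1}}{|D_{\boldsymbol{x}_{n-1}}f_{\omega_n}\boldsymbol{v}_{n-1}|}$. Then: (1) there exist $N_1\in\mathbb{N}$ and $(\omega_1,\dots,\omega_{N_1})\in\Omega_0^{N_1}$ such that $\boldsymbol{v}_{N_1}=(1,0,0)$; (2) if $\boldsymbol{v}=(1,0,0)$, then for any $\overline{\boldsymbol{v}}\in\mathbb{S}^2$ there exist $N_2\in\mathbb{N}$ and $(\omega_1,\dots,\omega_{N_2})\in\Omega_0^{N_2}$ such that $\boldsymbol{v}_{N_2}=\overline{\boldsymbol{v}}$.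
   Context: $\mathbb{T}^3=\mathbb{R}^3/(2\pi\mathbb{Z})^3$ with points $\boldsymbol{x}=(x,y,z)$; $\mathbb{S}^2$ is the unit sphere in $\mathbb{R}^3$. Fix $U>0$ and let $\Omega_0=[-U,U]^3\times[0,2\pi)^3$, with elements $\omega=(\mathsf{A},\mathsf{B},\mathsf{C},\alpha,\beta,\gamma)$. Define maps of $\mathbb{T}^3$: $f_{(\mathsf{A},\alpha)}(x,y,z)=(x+\mathsf{A}\sin(z+\alpha),\ y+\mathsf{A}\cos(z+\alpha),\ z)$, $f_{(\mathsf{B},\beta)}(x,y,z)=(x,\ y+\mathsf{B}\sin(x+\beta),\ z+\mathsf{B}\cos(x+\beta))$, $f_{(\mathsf{C},\gamma)}(x,y,z)=(x+\mathsf{C}\cos(y+\gamma),\ y,\ z+\mathsf{C}\sin(y+\gamma))$, and $f_\omega=f_{(\mathsf{C},\gamma)}\circ f_{(\mathsf{B},\beta)}\circ f_{(\mathsf{A},\alpha)}$; $D_{\boldsymbol{x}}f_\omega$ is the Jacobian matrix of $f_\omega$ at $\boldsymbol{x}$. *)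

theory Defs
  imports "HOL-Analysis.Analysis"
begin

text \<open>Points of the torus are represented by lifts in real^3 (coordinates x,y,z = p$1,p$2,p$3).
  Parameters omega = (A,B,C,alpha,beta,gamma).\<close>

type_synonym omega = "real \<times> real \<times> real \<times> real \<times> real \<times> real"

definition Omega0 :: "real \<Rightarrow> omega set" where
  "Omega0 U = {-U..U} \<times> {-U..U} \<times> {-U..U} \<times> {0..<2*pi} \<times> {0..<2*pi} \<times> {0..<2*pi}"

definition fA :: "real \<Rightarrow> real \<Rightarrow> real^3 \<Rightarrow> real^3" where
  "fA A \<alpha> p = vector [p$1 + A * sin (p$3 + \<alpha>), p$2 + A * cos (p$3 + \<alpha>), p$3]"

definition fB :: "real \<Rightarrow> real \<Rightarrow> real^3 \<Rightarrow> real^3" where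
  "fB B \<beta> p = vector [p$1, p$2 + B * sin (p$1 + \<beta>), p$3 + B * cos (p$1 + \<beta>)]"

definition fC :: "real \<Rightarrow> real \<Rightarrow> real^3 \<Rightarrow> real^3" where
  "fC C \<gamma> p = vector [p$1 + C * cos (p$2 + \<gamma>), p$2, p$3 + C * sin (p$2 + \<gamma>)]"

definition f_omega :: "omega \<Rightarrow> real^3 \<Rightarrow> real^3" where
  "f_omega w = (case w of (A, B, C, \<alpha>, \<beta>, \<gamma>) \<Rightarrow> fC C \<gamma> \<circ> fB B \<beta> \<circ> fA A \<alpha>)"

fun orbit :: "omega list \<Rightarrow> real^3 \<Rightarrow> real^3 \<Rightarrow> (real^3) \<times> (real^3)" where
  "orbit [] x v = (x, v)"
| "orbit (w # ws) x v =
     (let u = frechet_derivative (f_omega w) (at x) v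
      in orbit ws (f_omega w x) ((1 / norm u) *\<^sub>R u))"

end

theory Submission
  imports Defs
begin

(* Each of the three shears is, at every base point, differentiable with derivative a
   transvection v + v$i *R d of a fixed column i (i = 3, 1, 2 for f_A, f_B, f_C), and the
   parameters (A, alpha) produce every shear vector d with d$i = 0 and |d| <= U.  Since
   transvections of one column compose by adding their shear vectors, and only the
   direction of the tangent vector is recorded, the cocycle realises the projective action
   of every transvection.  These act transitively on the unit sphere: a unit vector with
   nonzero k-th coordinate is sheared to +-e_k, and three transvections carry -e_k to e_k. *)

definition transvection :: "'n::finite \<Rightarrow> real^'n \<Rightarrow> real^'n \<Rightarrow> real^'n" where
  "transvection i d u = u + u$i *\<^sub>R d"

lemma linear_transvection: "linear (transvection i d)"
  by (simp add: linear_iff transvection_def algebra_simps)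

lemma transvection_zero [simp]: "transvection i 0 u = u"
  by (simp add: transvection_def)

lemma transvection_transvection:
  "d'$i = 0 \<Longrightarrow> transvection i d (transvection i d' u) = transvection i (d + d') u"
  by (simp add: transvection_def algebra_simps)

lemma transvection_inverse: "d$i = 0 \<Longrightarrow> transvection i (- d) (transvection i d u) = u"
  by (simp add: transvection_transvection)

lemma transvection_eq_0_iff:
  assumes "d$i = 0"
  shows "transvection i d u = 0 \<longleftrightarrow> u = 0"
proof
  assume "transvection i d u = 0"
  then have "u = transvection i (- d) 0"
    using transvection_inverse[OF assms, of u] by metis
  then show "u = 0"
    by (simp add: transvection_def)
qed (simp add: transvection_def)

lemma sgn_linear_sgn:
  fixes f :: "'a::real_normed_vector \<Rightarrow> 'b::real_normed_vector"
  assumes "linear f"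
  shows "sgn (f (sgn y)) = sgn (f y)"
proof (cases "y = 0")
  case False
  have "f (sgn y) = inverse (norm y) *\<^sub>R f y"
    by (simp add: sgn_div_norm linear_cmul assms)
  moreover have "sgn (inverse (norm y)) = 1"
    using False by simp
  ultimately show ?thesis
    by (simp only: sgn_scaleR scaleR_one)
qed (simp add: linear_0 assms)

lemma sgn_norm_1: "norm u = 1 \<Longrightarrow> sgn u = u"
  by (simp add: sgn_div_norm)

definition shear_step :: "real^'n \<Rightarrow> real^'n \<Rightarrow> bool" where
  "shear_step u w \<longleftrightarrow> norm u = 1 \<and> (\<exists>i d. d$i = 0 \<and> w = sgn (transvection i d u))"

lemma shear_step_sgn: "y \<noteq> 0 \<Longrightarrow> d$i = 0 \<Longrightarrow> shear_step (sgn y) (sgn (transvection i d y))"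
  unfolding shear_step_def by (auto simp: norm_sgn sgn_linear_sgn linear_transvection)

lemma symp_shear_step: "symp shear_step"
proof (rule sympI)
  fix u w :: "real^'n"
  assume "shear_step u w"
  then obtain i d where "norm u = 1" "d$i = 0" "w = sgn (transvection i d u)"
    unfolding shear_step_def by blast
  moreover have "u \<noteq> 0"
    using \<open>norm u = 1\<close> by auto
  ultimately have "shear_step w (sgn (transvection i (- d) (transvection i d u)))"
    using shear_step_sgn[of "transvection i d u" "- d" i] by (simp add: transvection_eq_0_iff)
  then show "shear_step w u"
    using \<open>norm u = 1\<close> \<open>d$i = 0\<close> by (simp add: transvection_transvection sgn_norm_1)
qed

lemma shear_step_to_axis:
  assumes "norm v = 1" "v$k \<noteq> 0"
  shows "shear_step v (sgn (v$k) *\<^sub>R axis k 1)"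
proof -
  define d where "d = (\<chi> j. if j = k then 0 else - v$j / v$k)"
  have "transvection k d v = v$k *\<^sub>R axis k 1"
    using assms(2) by (simp add: transvection_def d_def axis_def vec_eq_iff)
  then have "sgn (transvection k d v) = sgn (v$k) *\<^sub>R axis k 1"
    by (simp add: sgn_scaleR sgn_norm_1)
  moreover have "d$k = 0"
    by (simp add: d_def)
  ultimately show ?thesis
    using assms(1) unfolding shear_step_def by metis
qed

lemma shear_steps_flip:
  fixes j k :: "'n::finite"
  assumes "j \<noteq> k"
  shows "shear_step\<^sup>*\<^sup>* (- axis k 1) (axis k 1 :: real^'n)"
proof -
  have step: "shear_step (sgn y) (sgn (transvection i d y))" if "y$k \<noteq> 0" "d$i = 0"
    for y d :: "real^'n" and i
    using shear_step_sgn[of y d i] that by force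
  define e e' where "e = (axis k 1 :: real^'n)" and "e' = (axis j 1 :: real^'n)"
  have coords: "e$k = 1" "e$j = 0" "e'$k = 0" "e'$j = 1"
    using assms by (simp_all add: e_def e'_def axis_def)
  have "shear_step (sgn (- e)) (sgn (- e - e'))"
    using step[of "- e" e' k] coords by (simp add: transvection_def)
  moreover have "shear_step (sgn (- e - e')) (sgn (e - e'))"
    using step[of "- e - e'" "- 2 *\<^sub>R e" j] coords by (simp add: transvection_def scaleR_2 algebra_simps)
  moreover have "shear_step (sgn (e - e')) (sgn e)"
    using step[of "e - e'" e' k] coords by (simp add: transvection_def)
  moreover have "sgn (- e) = - e" "sgn e = e"
    by (simp_all add: e_def sgn_norm_1)
  ultimately show ?thesis
    unfolding e_def by (metis rtranclp.rtrancl_refl rtranclp.rtrancl_into_rtrancl)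
qed

lemma ex_neq_if_card_ge_2:
  fixes k :: "'n::finite"
  assumes "CARD('n) \<ge> 2"
  shows "\<exists>j. j \<noteq> k"
proof (rule ccontr)
  assume "\<nexists>j. j \<noteq> k"
  then have "CARD('n) \<le> Suc 0"
    by (simp add: card_le_Suc0_iff_eq) metis
  with assms show False
    by simp
qed

lemma shear_step_to_nonzero_coord:
  fixes v :: "real^'n"
  assumes "norm v = 1" "v$k = 0"
  obtains v' where "shear_step v v'" "norm v' = 1" "v'$k \<noteq> 0"
proof -
  have "v \<noteq> 0"
    using assms(1) by auto
  then obtain j where "v$j \<noteq> 0"
    by (metis vec_eq_iff zero_index)
  with assms(2) have "j \<noteq> k"
    by auto
  define y where "y = transvection j (axis k 1) v"
  have "y$k \<noteq> 0"
    using \<open>v$j \<noteq> 0\<close> assms(2) by (simp add: y_def transvection_def axis_def)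
  then have "y \<noteq> 0"
    by (metis zero_index)
  have "shear_step v (sgn y)"
    using shear_step_sgn[of v "axis k 1" j] \<open>v \<noteq> 0\<close> \<open>j \<noteq> k\<close> assms(1)
    by (simp add: y_def sgn_norm_1 axis_def)
  moreover have "(sgn y)$k \<noteq> 0"
    using \<open>y$k \<noteq> 0\<close> \<open>y \<noteq> 0\<close> by (simp add: sgn_div_norm)
  ultimately show ?thesis
    using \<open>y \<noteq> 0\<close> by (intro that[of "sgn y"]) (simp_all add: norm_sgn)
qed

lemma shear_steps_to_axis:
  fixes v :: "real^'n"
  assumes "CARD('n) \<ge> 2" "norm v = 1"
  shows "shear_step\<^sup>*\<^sup>* v (axis k 1)"
proof -
  obtain v' where "shear_step\<^sup>*\<^sup>* v v'" "norm v' = 1" "v'$k \<noteq> 0"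
  proof (cases "v$k = 0")
    case True
    with assms(2) show ?thesis
      by (metis shear_step_to_nonzero_coord r_into_rtranclp that)
  qed (use that assms(2) in blast)
  then have to_axis: "shear_step\<^sup>*\<^sup>* v (sgn (v'$k) *\<^sub>R axis k 1)"
    using shear_step_to_axis by (meson rtranclp.rtrancl_into_rtrancl)
  show ?thesis
  proof (cases "v'$k > 0")
    case True
    then show ?thesis
      using to_axis by simp
  next
    case False
    with to_axis \<open>v'$k \<noteq> 0\<close> have "shear_step\<^sup>*\<^sup>* v (- axis k 1)"
      by simp
    moreover obtain j where "j \<noteq> k"
      using ex_neq_if_card_ge_2 assms(1) by blast
    ultimately show ?thesis
      using shear_steps_flip by (metis rtranclp_trans)
  qed
qed

lemma shear_steps_connected:
  fixes u w :: "real^'n"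
  assumes "CARD('n) \<ge> 2" "norm u = 1" "norm w = 1"
  shows "shear_step\<^sup>*\<^sup>* u w"
proof -
  fix k :: 'n
  have "shear_step\<^sup>*\<^sup>* u (axis k 1)" "shear_step\<^sup>*\<^sup>* w (axis k 1)"
    using shear_steps_to_axis assms by auto
  then show ?thesis
    using symp_rtranclp[OF symp_shear_step] by (meson rtranclp_trans sympD)
qed

lemma fA_has_derivative:
  "(fA A \<alpha> has_derivative transvection 3 (vector [A * cos (x$3 + \<alpha>), - A * sin (x$3 + \<alpha>), 0])) (at x)"
proof -
  have eq: "fA A \<alpha> = (\<lambda>p. p + (A * sin (p$3 + \<alpha>)) *\<^sub>R axis 1 1 + (A * cos (p$3 + \<alpha>)) *\<^sub>R axis 2 1)"
    by (auto simp: fA_def vec_eq_iff forall_3 axis_def)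
  show ?thesis
    unfolding eq
    apply (rule derivative_eq_intros bounded_linear_imp_has_derivative bounded_linear_vec_nth refl)+
    apply (simp add: fun_eq_iff transvection_def vec_eq_iff forall_3 axis_def)
    done
qed

lemma fB_has_derivative:
  "(fB B \<beta> has_derivative transvection 1 (vector [0, B * cos (x$1 + \<beta>), - B * sin (x$1 + \<beta>)])) (at x)"
proof -
  have eq: "fB B \<beta> = (\<lambda>p. p + (B * sin (p$1 + \<beta>)) *\<^sub>R axis 2 1 + (B * cos (p$1 + \<beta>)) *\<^sub>R axis 3 1)"
    by (auto simp: fB_def vec_eq_iff forall_3 axis_def)
  show ?thesis
    unfolding eq
    apply (rule derivative_eq_intros bounded_linear_imp_has_derivative bounded_linear_vec_nth refl)+
    apply (simp add: fun_eq_iff transvection_def vec_eq_iff forall_3 axis_def)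
    done
qed

lemma fC_has_derivative:
  "(fC C \<gamma> has_derivative transvection 2 (vector [- C * sin (x$2 + \<gamma>), 0, C * cos (x$2 + \<gamma>)])) (at x)"
proof -
  have eq: "fC C \<gamma> = (\<lambda>p. p + (C * cos (p$2 + \<gamma>)) *\<^sub>R axis 1 1 + (C * sin (p$2 + \<gamma>)) *\<^sub>R axis 3 1)"
    by (auto simp: fC_def vec_eq_iff forall_3 axis_def)
  show ?thesis
    unfolding eq
    apply (rule derivative_eq_intros bounded_linear_imp_has_derivative bounded_linear_vec_nth refl)+
    apply (simp add: fun_eq_iff transvection_def vec_eq_iff forall_3 axis_def)
    done
qed

lemma f_omega_simps:
  "f_omega (A, 0, 0, \<alpha>, 0, 0) = fA A \<alpha>"
  "f_omega (0, B, 0, 0, \<beta>, 0) = fB B \<beta>"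
  "f_omega (0, 0, C, 0, 0, \<gamma>) = fC C \<gamma>"
  by (auto simp: f_omega_def fA_def fB_def fC_def fun_eq_iff vec_eq_iff forall_3)

lemma amplitude_phase_exists:
  fixes p q U z :: real
  assumes "p\<^sup>2 + q\<^sup>2 \<le> U\<^sup>2" "0 \<le> U"
  obtains A \<alpha> where "\<bar>A\<bar> \<le> U" "0 \<le> \<alpha>" "\<alpha> < 2 * pi" "A * cos (z + \<alpha>) = p" "A * sin (z + \<alpha>) = q"
proof (cases "p = 0 \<and> q = 0")
  case True
  then show ?thesis using that[of 0 0] assms by simp
next
  case False
  define r where "r = sqrt (p\<^sup>2 + q\<^sup>2)"
  have "r > 0" using False by (simp add: r_def sum_power2_gt_zero_iff)
  have "r \<le> U" using assms by (simp add: r_def real_le_lsqrt)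
  have "(p * cos z + q * sin z)\<^sup>2 + (q * cos z - p * sin z)\<^sup>2 = p\<^sup>2 + q\<^sup>2"
    using sin_cos_squared_add[of z] by algebra
  also have "\<dots> = r\<^sup>2"
    by (simp add: r_def)
  finally have "((p * cos z + q * sin z) / r)\<^sup>2 + ((q * cos z - p * sin z) / r)\<^sup>2 = 1"
    using \<open>r > 0\<close> by (simp add: power_divide flip: add_divide_distrib)
  then obtain \<alpha> where \<alpha>: "0 \<le> \<alpha>" "\<alpha> < 2 * pi"
    "(p * cos z + q * sin z) / r = cos \<alpha>" "(q * cos z - p * sin z) / r = sin \<alpha>"
    by (rule sincos_total_2pi)
  have "r * cos (z + \<alpha>) = p" "r * sin (z + \<alpha>) = q"
    using \<open>r > 0\<close> by (simp_all add: cos_add sin_add flip: \<alpha>(3,4) add: field_simps)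
      (use sin_cos_squared_add3[of z] in algebra)+
  with \<alpha>(1,2) \<open>r > 0\<close> \<open>r \<le> U\<close> show ?thesis
    by (intro that[of r \<alpha>]) simp_all
qed

lemma fA_realises_transvection:
  assumes "0 \<le> U" "d$3 = 0" "(d$1)\<^sup>2 + (d$2)\<^sup>2 \<le> U\<^sup>2"
  shows "\<exists>\<omega>\<in>Omega0 U. (f_omega \<omega> has_derivative transvection 3 d) (at x)"
proof -
  have "(d$1)\<^sup>2 + (- d$2)\<^sup>2 \<le> U\<^sup>2"
    using assms(3) by simp
  then obtain A \<alpha> where "\<bar>A\<bar> \<le> U" "0 \<le> \<alpha>" "\<alpha> < 2 * pi"
    "A * cos (x$3 + \<alpha>) = d$1" "A * sin (x$3 + \<alpha>) = - d$2"
    using assms(1) by (rule amplitude_phase_exists)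
  moreover have "d = vector [d$1, d$2, 0]"
    using assms(2) by (simp add: vec_eq_iff forall_3)
  ultimately show ?thesis
    using fA_has_derivative[of A \<alpha> x] assms(1)
    by (intro bexI[of _ "(A, 0, 0, \<alpha>, 0, 0)"]) (auto simp: f_omega_simps Omega0_def abs_le_iff)
qed

lemma fB_realises_transvection:
  assumes "0 \<le> U" "d$1 = 0" "(d$2)\<^sup>2 + (d$3)\<^sup>2 \<le> U\<^sup>2"
  shows "\<exists>\<omega>\<in>Omega0 U. (f_omega \<omega> has_derivative transvection 1 d) (at x)"
proof -
  have "(d$2)\<^sup>2 + (- d$3)\<^sup>2 \<le> U\<^sup>2"
    using assms(3) by simp
  then obtain B \<beta> where "\<bar>B\<bar> \<le> U" "0 \<le> \<beta>" "\<beta> < 2 * pi"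
    "B * cos (x$1 + \<beta>) = d$2" "B * sin (x$1 + \<beta>) = - d$3"
    using assms(1) by (rule amplitude_phase_exists)
  moreover have "d = vector [0, d$2, d$3]"
    using assms(2) by (simp add: vec_eq_iff forall_3)
  ultimately show ?thesis
    using fB_has_derivative[of B \<beta> x] assms(1)
    by (intro bexI[of _ "(0, B, 0, 0, \<beta>, 0)"]) (auto simp: f_omega_simps Omega0_def abs_le_iff)
qed

lemma fC_realises_transvection:
  assumes "0 \<le> U" "d$2 = 0" "(d$1)\<^sup>2 + (d$3)\<^sup>2 \<le> U\<^sup>2"
  shows "\<exists>\<omega>\<in>Omega0 U. (f_omega \<omega> has_derivative transvection 2 d) (at x)"
proof -
  have "(d$3)\<^sup>2 + (- d$1)\<^sup>2 \<le> U\<^sup>2"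
    using assms(3) by simp
  then obtain C \<gamma> where "\<bar>C\<bar> \<le> U" "0 \<le> \<gamma>" "\<gamma> < 2 * pi"
    "C * cos (x$2 + \<gamma>) = d$3" "C * sin (x$2 + \<gamma>) = - d$1"
    using assms(1) by (rule amplitude_phase_exists)
  moreover have "d = vector [d$1, 0, d$3]"
    using assms(2) by (simp add: vec_eq_iff forall_3)
  ultimately show ?thesis
    using fC_has_derivative[of C \<gamma> x] assms(1)
    by (intro bexI[of _ "(0, 0, C, 0, 0, \<gamma>)"]) (auto simp: f_omega_simps Omega0_def abs_le_iff)
qed

lemma transvection_is_derivative:
  assumes "0 \<le> U" "d$i = 0" "norm d \<le> U"
  shows "\<exists>\<omega>\<in>Omega0 U. (f_omega \<omega> has_derivative transvection i d) (at x)"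
proof -
  have "(norm d)\<^sup>2 \<le> U\<^sup>2"
    using assms by (simp add: power_mono)
  then have norm_bound: "(d$1)\<^sup>2 + (d$2)\<^sup>2 + (d$3)\<^sup>2 \<le> U\<^sup>2"
    unfolding power2_norm_eq_inner by (simp add: inner_vec_def sum_3 power2_eq_square)
  consider "i = 1" | "i = 2" | "i = 3"
    using exhaust_3 by blast
  then show ?thesis
  proof cases
    case 1
    then show ?thesis
      using fB_realises_transvection[of U d x] assms norm_bound by simp
  next
    case 2
    then show ?thesis
      using fC_realises_transvection[of U d x] assms norm_bound by simp
  next
    case 3
    then show ?thesis
      using fA_realises_transvection[of U d x] assms norm_bound by simp
  qed
qed

(* Quantifying over the base point makes reachability transitive: the second word of
   parameters starts wherever the first one has moved the base point. *)
definition reachable :: "real \<Rightarrow> real^3 \<Rightarrow> real^3 \<Rightarrow> bool" where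
  "reachable U u w \<longleftrightarrow> (\<forall>x. \<exists>ws. set ws \<subseteq> Omega0 U \<and> snd (orbit ws x u) = w)"

lemma orbit_append: "orbit (ws @ ws') x v = orbit ws' (fst (orbit ws x v)) (snd (orbit ws x v))"
  by (induction ws arbitrary: x v) (simp_all add: Let_def)

lemma reachable_refl: "reachable U u u"
  unfolding reachable_def by (intro allI exI[of _ "[]"]) simp

lemma reachable_trans:
  assumes "reachable U u v" "reachable U v w"
  shows "reachable U u w"
  unfolding reachable_def
proof
  fix x
  obtain ws where ws: "set ws \<subseteq> Omega0 U" "snd (orbit ws x u) = v"
    using assms(1) unfolding reachable_def by blast
  obtain ws' where ws': "set ws' \<subseteq> Omega0 U" "snd (orbit ws' (fst (orbit ws x u)) v) = w"
    using assms(2) unfolding reachable_def by blast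
  show "\<exists>ws. set ws \<subseteq> Omega0 U \<and> snd (orbit ws x u) = w"
    using ws ws' by (intro exI[of _ "ws @ ws'"]) (simp add: orbit_append)
qed

lemma reachable_transvection_small:
  assumes "0 \<le> U" "d$i = 0" "norm d \<le> U"
  shows "reachable U u (sgn (transvection i d u))"
  unfolding reachable_def
proof
  fix x
  obtain \<omega> where "\<omega> \<in> Omega0 U" and deriv: "(f_omega \<omega> has_derivative transvection i d) (at x)"
    using transvection_is_derivative[OF assms] by blast
  have "snd (orbit [\<omega>] x u) = sgn (transvection i d u)"
    by (simp add: frechet_derivative_at[OF deriv, symmetric] Let_def sgn_div_norm inverse_eq_divide)
  with \<open>\<omega> \<in> Omega0 U\<close> show "\<exists>ws. set ws \<subseteq> Omega0 U \<and> snd (orbit ws x u) = sgn (transvection i d u)"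
    by (intro exI[of _ "[\<omega>]"]) simp
qed

lemma reachable_transvection:
  assumes "0 < U" "d$i = 0"
  shows "reachable U u (sgn (transvection i d u))"
proof -
  obtain n :: nat where n: "norm d / U < n"
    using reals_Archimedean2 by blast
  moreover have "0 \<le> norm d / U"
    using assms(1) by simp
  ultimately have "n > 0"
    by linarith
  define e where "e = d /\<^sub>R real n"
  have "e$i = 0"
    using assms(2) by (simp add: e_def)
  moreover have "norm e \<le> U"
    using n assms(1) \<open>n > 0\<close> by (simp add: e_def field_simps)
  ultimately have step: "reachable U y (sgn (transvection i e y))" for y
    using reachable_transvection_small assms(1) by simp
  have "reachable U u (sgn (transvection i (real (Suc m) *\<^sub>R e) u))" for m
  proof (induction m)
    case 0
    then show ?case
      using step by simp
  next
    case (Suc m)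
    let ?y = "transvection i (real (Suc m) *\<^sub>R e) u"
    have "e + real (Suc m) *\<^sub>R e = real (Suc (Suc m)) *\<^sub>R e"
      by (metis of_nat_Suc scaleR_add_left scaleR_one)
    with \<open>e$i = 0\<close> have "sgn (transvection i e (sgn ?y)) = sgn (transvection i (real (Suc (Suc m)) *\<^sub>R e) u)"
      by (simp add: sgn_linear_sgn linear_transvection transvection_transvection)
    then show ?case
      using Suc.IH step[of "sgn ?y"] reachable_trans by metis
  qed
  from this[of "n - 1"] show ?thesis
    using \<open>n > 0\<close> by (simp add: e_def)
qed

lemma reachable_if_shear_steps:
  assumes "0 < U" "shear_step\<^sup>*\<^sup>* u w"
  shows "reachable U u w"
  using assms(2)
proof (induction rule: rtranclp_induct)
  case base
  then show ?case
    by (rule reachable_refl)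
next
  case (step y z)
  then obtain i d where "d$i = 0" "z = sgn (transvection i d y)"
    unfolding shear_step_def by blast
  then have "reachable U y z"
    using reachable_transvection[OF assms(1)] by simp
  with step.IH show ?case
    by (rule reachable_trans)
qed

theorem lemma3p3:
  fixes U :: real and x v :: "real^3"
  assumes "U > 0" and "v \<in> sphere 0 1"
  shows "(\<exists>ws. set ws \<subseteq> Omega0 U \<and> snd (orbit ws x v) = vector [1, 0, 0])
       \<and> (v = vector [1, 0, 0] \<longrightarrow>
            (\<forall>vb \<in> sphere 0 1. \<exists>ws. set ws \<subseteq> Omega0 U \<and> snd (orbit ws x v) = vb))"
proof -
  have reach: "reachable U u w" if "norm u = 1" "norm w = 1" for u w :: "real^3"
    using reachable_if_shear_steps[OF assms(1) shear_steps_connected] that by simp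
  have "vector [1, 0, 0] = (axis 1 1 :: real^3)"
    by (simp add: vec_eq_iff forall_3 axis_def)
  then have "norm (vector [1, 0, 0] :: real^3) = 1"
    by simp
  then show ?thesis
    using reach assms(2) unfolding reachable_def by auto
qed

end
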